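(* Every graph $G$ with circular chromatic number $\chi_c(G)\le 5/2$ belongs to CBU.
   Context: Let $e_1,\ldots,e_d$ be the standard basis of $\mathbb{R}^d$. For $d\ge 1$, a graph belongs to $d$-CBU if one can assign to each vertex an axis-parallel box (product of $d$ closed intervals of positive length) in $\mathbb{R}^d$ such that the boxes have pairwise disjoint interiors, two distinct vertices are adjacent iff their boxes intersect, and any two intersecting boxes intersect in a $(d-1)$-dimensional box orthogonal to $e_1$. CBU is the union of $d$-CBU over all $d\ge 1$. *)

theory Defs
  imports Complex_Main
begin

definition is_graph :: "'a set \<Rightarrow> ('a \<Rightarrow> 'a \<Rightarrow> bool) \<Rightarrow> bool" where
  "is_graph V E \<longleftrightarrow> (\<forall>u v. E u v \<longrightarrow> u \<in> V \<and> v \<in> V) \<and> (\<forall>u v. E u v \<longrightarrow> E v u) \<and> (\<forall>v. \<not> E v v)"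

definition circ_coloring :: "'a set \<Rightarrow> ('a \<Rightarrow> 'a \<Rightarrow> bool) \<Rightarrow> nat \<Rightarrow> nat \<Rightarrow> ('a \<Rightarrow> nat) \<Rightarrow> bool" where
  "circ_coloring V E k d c \<longleftrightarrow> (\<forall>v\<in>V. c v < k) \<and>
     (\<forall>u\<in>V. \<forall>v\<in>V. E u v \<longrightarrow>
        int d \<le> \<bar>int (c u) - int (c v)\<bar> \<and> \<bar>int (c u) - int (c v)\<bar> \<le> int k - int d)"

definition circular_chromatic_number :: "'a set \<Rightarrow> ('a \<Rightarrow> 'a \<Rightarrow> bool) \<Rightarrow> real" where
  "circular_chromatic_number V E =
     Inf {real k / real d | k d. 1 \<le> d \<and> d \<le> k \<and> (\<exists>c. circ_coloring V E k d c)}"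

text \<open>Points of R^d are represented as functions nat \<Rightarrow> real vanishing at coordinates \<ge> d
  (coordinate i corresponds to e_(i+1); coordinate 0 is the e_1 direction).\<close>
definition cbox_d :: "nat \<Rightarrow> (nat \<Rightarrow> real) \<Rightarrow> (nat \<Rightarrow> real) \<Rightarrow> (nat \<Rightarrow> real) set" where
  "cbox_d d a b = {x. (\<forall>i<d. a i \<le> x i \<and> x i \<le> b i) \<and> (\<forall>i\<ge>d. x i = 0)}"

definition obox_d :: "nat \<Rightarrow> (nat \<Rightarrow> real) \<Rightarrow> (nat \<Rightarrow> real) \<Rightarrow> (nat \<Rightarrow> real) set" where
  "obox_d d a b = {x. (\<forall>i<d. a i < x i \<and> x i < b i) \<and> (\<forall>i\<ge>d. x i = 0)}"

definition d_CBU :: "nat \<Rightarrow> 'a set \<Rightarrow> ('a \<Rightarrow> 'a \<Rightarrow> bool) \<Rightarrow> bool" where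
  "d_CBU d V E \<longleftrightarrow> (\<exists>A B :: 'a \<Rightarrow> nat \<Rightarrow> real.
     (\<forall>v\<in>V. \<forall>i<d. A v i < B v i) \<and>
     (\<forall>u\<in>V. \<forall>v\<in>V. u \<noteq> v \<longrightarrow> obox_d d (A u) (B u) \<inter> obox_d d (A v) (B v) = {}) \<and>
     (\<forall>u\<in>V. \<forall>v\<in>V. u \<noteq> v \<longrightarrow>
        (E u v \<longleftrightarrow> cbox_d d (A u) (B u) \<inter> cbox_d d (A v) (B v) \<noteq> {})) \<and>
     (\<forall>u\<in>V. \<forall>v\<in>V. u \<noteq> v \<longrightarrow> cbox_d d (A u) (B u) \<inter> cbox_d d (A v) (B v) \<noteq> {} \<longrightarrow>
        (\<exists>a b. a 0 = b 0 \<and> (\<forall>i. 1 \<le> i \<and> i < d \<longrightarrow> a i < b i) \<and>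
               cbox_d d (A u) (B u) \<inter> cbox_d d (A v) (B v) = cbox_d d a b)))"

definition CBU :: "'a set \<Rightarrow> ('a \<Rightarrow> 'a \<Rightarrow> bool) \<Rightarrow> bool" where
  "CBU V E \<longleftrightarrow> (\<exists>d\<ge>1. d_CBU d V E)"

end

theory Submission
  imports Defs "HOL-Analysis.Analysis"
begin

(* For a finite graph, chi_c <= k/d already forces a (k,d)-colouring. Colourings with ratio
   k'/d' slightly above k/d rescale to colourings of V by points of a circle of circumference
   slightly above k/d; by compactness (V is finite) a subsequence converges to a colouring by
   points of the circle of circumference k/d, and rounding d times it down gives a
   (k,d)-colouring.

   A (5,2)-colouring is a homomorphism to the pentagram, which has an interval model on the
   e_1-axis in which adjacent colours get intervals meeting in one endpoint; one further
   coordinate per vertex separates the boxes of non-adjacent vertices. *)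

lemma finite_bounded_imp_convergent_subseq:
  fixes F :: "nat \<Rightarrow> 'a \<Rightarrow> real"
  assumes "finite V" and "\<And>j v. v \<in> V \<Longrightarrow> \<bar>F j v\<bar> \<le> M"
  shows "\<exists>s l. strict_mono s \<and> (\<forall>v\<in>V. (\<lambda>j. F (s j) v) \<longlonglongrightarrow> l v)"
  using assms
proof (induction V rule: finite_induct)
  case empty
  show ?case by (rule exI[of _ id]) (auto simp: strict_mono_def)
next
  case (insert x V)
  then obtain s l where s: "strict_mono s" and l: "\<forall>v\<in>V. (\<lambda>j. F (s j) v) \<longlonglongrightarrow> l v"
    by blast
  have "bounded (range (\<lambda>j. F (s j) x))"
    unfolding bounded_real using insert.prems by blast
  then obtain lx t where t: "strict_mono t" and lx: "((\<lambda>j. F (s j) x) \<circ> t) \<longlonglongrightarrow> lx"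
    using bounded_imp_convergent_subsequence by blast
  have conv: "(\<lambda>j. F (s (t j)) v) \<longlonglongrightarrow> (l(x := lx)) v" if "v \<in> insert x V" for v
  proof (cases "v = x")
    case True
    then show ?thesis using lx by (simp add: o_def)
  next
    case False
    then have "((\<lambda>j. F (s j) v) \<circ> t) \<longlonglongrightarrow> l v"
      using l t that LIMSEQ_subseq_LIMSEQ by blast
    then show ?thesis using False by (simp add: o_def)
  qed
  show ?case
  proof (intro exI conjI)
    show "strict_mono (s \<circ> t)" using s t by (rule strict_mono_o)
    show "\<forall>v\<in>insert x V. (\<lambda>j. F ((s \<circ> t) j) v) \<longlonglongrightarrow> (l(x := lx)) v"
      using conv by simp
  qed
qed

text \<open>A colouring by points of the circle of circumference \<open>r\<close>, cut open to \<open>[0, r]\<close>: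
  the bound \<open>r - 1\<close> says that adjacent vertices are at circular distance at least 1.\<close>
definition real_circ_coloring :: "'a set \<Rightarrow> ('a \<Rightarrow> 'a \<Rightarrow> bool) \<Rightarrow> real \<Rightarrow> ('a \<Rightarrow> real) \<Rightarrow> bool" where
  "real_circ_coloring V E r f \<longleftrightarrow> (\<forall>v\<in>V. 0 \<le> f v \<and> f v \<le> r) \<and>
     (\<forall>u\<in>V. \<forall>v\<in>V. E u v \<longrightarrow> 1 \<le> \<bar>f u - f v\<bar> \<and> \<bar>f u - f v\<bar> \<le> r - 1)"

lemma real_circ_coloring_mono:
  "real_circ_coloring V E r f \<Longrightarrow> r \<le> r' \<Longrightarrow> real_circ_coloring V E r' f"
  unfolding real_circ_coloring_def by force

lemma real_circ_coloring_of_circ_coloring: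
  assumes "circ_coloring V E k d c" and "0 < d"
  shows "real_circ_coloring V E (real k / real d) (\<lambda>v. real (c v) / real d)"
  unfolding real_circ_coloring_def
proof (intro conjI ballI impI)
  fix v assume "v \<in> V"
  then have "c v < k" using assms(1) by (simp add: circ_coloring_def)
  then show "real (c v) / real d \<le> real k / real d" by (simp add: divide_right_mono)
  show "0 \<le> real (c v) / real d" by simp
next
  fix u v assume "u \<in> V" "v \<in> V" "E u v"
  then have "int d \<le> \<bar>int (c u) - int (c v)\<bar>" "\<bar>int (c u) - int (c v)\<bar> \<le> int k - int d"
    using assms(1) unfolding circ_coloring_def by blast+
  then have "real d \<le> \<bar>real (c u) - real (c v)\<bar>" "\<bar>real (c u) - real (c v)\<bar> \<le> real k - real d"
    by linarith+
  moreover have "\<bar>real (c u) / real d - real (c v) / real d\<bar> = \<bar>real (c u) - real (c v)\<bar> / real d"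
    by (simp add: diff_divide_distrib[symmetric])
  ultimately show "1 \<le> \<bar>real (c u) / real d - real (c v) / real d\<bar>"
    and "\<bar>real (c u) / real d - real (c v) / real d\<bar> \<le> real k / real d - 1"
    using \<open>0 < d\<close> by (simp_all add: field_simps)
qed

lemma real_circ_coloring_limit:
  assumes "finite V" and col: "\<And>j. real_circ_coloring V E (r j) (F j)" and r: "r \<longlonglongrightarrow> r0"
  shows "\<exists>f. real_circ_coloring V E r0 f"
proof -
  obtain M where M: "\<And>j. \<bar>r j\<bar> \<le> M"
    using convergent_imp_bounded[OF r] by (auto simp: bounded_real)
  have "\<bar>F j v\<bar> \<le> M" if "v \<in> V" for j v
  proof -
    have "0 \<le> F j v" "F j v \<le> r j" using col[of j] that by (auto simp: real_circ_coloring_def)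
    then show ?thesis using M[of j] by linarith
  qed
  then obtain s l where s: "strict_mono s" and l: "\<forall>v\<in>V. (\<lambda>j. F (s j) v) \<longlonglongrightarrow> l v"
    using finite_bounded_imp_convergent_subseq[OF \<open>finite V\<close>] by blast
  have rs: "(\<lambda>j. r (s j)) \<longlonglongrightarrow> r0"
    using LIMSEQ_subseq_LIMSEQ[OF r s] by (simp add: o_def)
  have "real_circ_coloring V E r0 l"
    unfolding real_circ_coloring_def
  proof (intro conjI ballI impI)
    fix v assume v: "v \<in> V"
    have lv: "(\<lambda>j. F (s j) v) \<longlonglongrightarrow> l v" using l v by blast
    have "0 \<le> F (s j) v" "F (s j) v \<le> r (s j)" for j
      using col[of "s j"] v by (auto simp: real_circ_coloring_def)
    then show "0 \<le> l v" "l v \<le> r0"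
      by (auto intro!: LIMSEQ_le_const[OF lv] LIMSEQ_le[OF lv rs])
  next
    fix u v assume uv: "u \<in> V" "v \<in> V" "E u v"
    have dist: "(\<lambda>j. \<bar>F (s j) u - F (s j) v\<bar>) \<longlonglongrightarrow> \<bar>l u - l v\<bar>"
      using l uv by (intro tendsto_rabs tendsto_diff) auto
    have "1 \<le> \<bar>F (s j) u - F (s j) v\<bar>" "\<bar>F (s j) u - F (s j) v\<bar> \<le> r (s j) - 1" for j
      using col[of "s j"] uv by (auto simp: real_circ_coloring_def)
    then show "1 \<le> \<bar>l u - l v\<bar>" "\<bar>l u - l v\<bar> \<le> r0 - 1"
      by (auto intro!: LIMSEQ_le_const[OF dist] LIMSEQ_le[OF dist tendsto_diff[OF rs tendsto_const]])
  qed
  then show ?thesis by blast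
qed

lemma circ_coloring_by_injection:
  assumes "finite V" and "\<And>v. \<not> E v v"
  shows "\<exists>c. circ_coloring V E (Suc (card V)) 1 c"
proof -
  obtain h where h: "bij_betw h V {0..<card V}"
    using ex_bij_betw_finite_nat[OF \<open>finite V\<close>] by blast
  have "circ_coloring V E (Suc (card V)) 1 h"
    unfolding circ_coloring_def
  proof (intro conjI ballI impI)
    fix v assume "v \<in> V"
    then show "h v < Suc (card V)" using bij_betw_apply[OF h] by fastforce
  next
    fix u v assume uv: "u \<in> V" "v \<in> V" "E u v"
    then have "h u \<noteq> h v" using h assms(2) by (metis bij_betw_inv_into_left)
    then show "int 1 \<le> \<bar>int (h u) - int (h v)\<bar>" by simp
    have "h u < card V" "h v < card V" using h uv by (auto simp: bij_betw_def)
    then show "\<bar>int (h u) - int (h v)\<bar> \<le> int (Suc (card V)) - int 1" by simp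
  qed
  then show ?thesis by blast
qed

lemma real_circ_coloring_if_circular_chromatic_number_le:
  assumes "finite V" and "\<And>v. \<not> E v v" and "circular_chromatic_number V E \<le> r"
  shows "\<exists>f. real_circ_coloring V E r f"
proof -
  define S where
    "S = {real k / real d | k d. 1 \<le> d \<and> d \<le> k \<and> (\<exists>c. circ_coloring V E k d c)}"
  have "S \<noteq> {}"
    using circ_coloring_by_injection[of V E, OF assms(1,2)] unfolding S_def by fastforce
  have "\<exists>f. real_circ_coloring V E (r + inverse (real (Suc j))) f" for j
  proof -
    have "Inf S \<le> r"
      using assms(3) unfolding circular_chromatic_number_def S_def .
    moreover have "0 < inverse (real (Suc j))" by simp
    ultimately have "Inf S < r + inverse (real (Suc j))" by linarith
    then obtain k d c where "1 \<le> d" "circ_coloring V E k d c"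
        "real k / real d < r + inverse (real (Suc j))"
      using cInf_lessD[OF \<open>S \<noteq> {}\<close>] unfolding S_def by blast
    then show ?thesis
      by (meson real_circ_coloring_of_circ_coloring real_circ_coloring_mono
          less_imp_le less_le_trans zero_less_one)
  qed
  then obtain F where "\<And>j. real_circ_coloring V E (r + inverse (real (Suc j))) (F j)"
    by metis
  from real_circ_coloring_limit[OF \<open>finite V\<close> this LIMSEQ_inverse_real_of_nat_add]
  show ?thesis .
qed

lemma floor_dist_bounds:
  fixes x y :: real and a b :: int
  assumes "a \<le> \<bar>x - y\<bar>" and "\<bar>x - y\<bar> \<le> b"
  shows "a \<le> \<bar>\<lfloor>x\<rfloor> - \<lfloor>y\<rfloor>\<bar> \<and> \<bar>\<lfloor>x\<rfloor> - \<lfloor>y\<rfloor>\<bar> \<le> b"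
proof -
  have shift: "\<lfloor>p\<rfloor> + n \<le> \<lfloor>q\<rfloor>" if "p + n \<le> q" for p q :: real and n :: int
    using floor_mono[OF that] by simp
  show ?thesis
    using shift[of x a y] shift[of y a x] shift[of x "-b" y] shift[of y "-b" x]
      shift[of x 0 y] shift[of y 0 x] assms
    by (cases "x \<le> y") (auto simp: abs_if split: if_splits)
qed

text \<open>Wrapping the point \<open>k\<close> of \<open>[0, k]\<close> round to \<open>0\<close> does not change circular distances.\<close>
lemma circ_dist_mod:
  fixes X Y k d :: int
  assumes "0 \<le> X" "X \<le> k" "0 \<le> Y" "Y \<le> k" "0 < d" "d \<le> \<bar>X - Y\<bar>" "\<bar>X - Y\<bar> \<le> k - d"
  shows "d \<le> \<bar>X mod k - Y mod k\<bar> \<and> \<bar>X mod k - Y mod k\<bar> \<le> k - d"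
proof -
  have "X mod k = (if X = k then 0 else X)" "Y mod k = (if Y = k then 0 else Y)"
    using assms by auto
  then show ?thesis using assms by auto
qed

lemma circ_coloring_of_real_circ_coloring:
  assumes col: "real_circ_coloring V E (real k / real d) f" and "0 < d" and "0 < k"
  shows "circ_coloring V E k d (\<lambda>v. nat \<lfloor>real d * f v\<rfloor> mod k)"
proof -
  define X where "X v = \<lfloor>real d * f v\<rfloor>" for v
  have range: "0 \<le> X v \<and> X v \<le> int k" if "v \<in> V" for v
  proof -
    have "0 \<le> f v" "real d * f v \<le> real k"
      using col that \<open>0 < d\<close> by (auto simp: real_circ_coloring_def field_simps)
    then show ?thesis unfolding X_def by (simp add: floor_le_iff)
  qed
  have int_col: "int (nat (X v) mod k) = X v mod int k" if "v \<in> V" for v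
    using range[OF that] by (simp add: zmod_int)
  have edge: "int d \<le> \<bar>X u - X v\<bar> \<and> \<bar>X u - X v\<bar> \<le> int k - int d"
    if "u \<in> V" "v \<in> V" "E u v" for u v
  proof -
    have "1 \<le> \<bar>f u - f v\<bar>" "\<bar>f u - f v\<bar> \<le> real k / real d - 1"
      using col that by (auto simp: real_circ_coloring_def)
    moreover have "\<bar>real d * f u - real d * f v\<bar> = real d * \<bar>f u - f v\<bar>"
      by (simp add: abs_mult flip: right_diff_distrib)
    ultimately have "real_of_int (int d) \<le> \<bar>real d * f u - real d * f v\<bar>"
      "\<bar>real d * f u - real d * f v\<bar> \<le> real_of_int (int k - int d)"
      using \<open>0 < d\<close> by (simp_all add: field_simps)
    then show ?thesis unfolding X_def by (rule floor_dist_bounds)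
  qed
  show ?thesis
    unfolding circ_coloring_def
  proof (intro conjI ballI impI)
    fix v show "nat \<lfloor>real d * f v\<rfloor> mod k < k" using \<open>0 < k\<close> by simp
  next
    fix u v assume uv: "u \<in> V" "v \<in> V" "E u v"
    then show "int d \<le> \<bar>int (nat \<lfloor>real d * f u\<rfloor> mod k) - int (nat \<lfloor>real d * f v\<rfloor> mod k)\<bar>"
      and "\<bar>int (nat \<lfloor>real d * f u\<rfloor> mod k) - int (nat \<lfloor>real d * f v\<rfloor> mod k)\<bar> \<le> int k - int d"
      using circ_dist_mod[of "X u" "int k" "X v" "int d"] range edge int_col \<open>0 < d\<close>
      unfolding X_def by auto
  qed
qed

lemma circ_colorable_if_circular_chromatic_number_le:
  assumes "finite V" and "\<And>v. \<not> E v v"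
    and "circular_chromatic_number V E \<le> real k / real d" and "0 < d" and "0 < k"
  shows "\<exists>c. circ_coloring V E k d c"
  using real_circ_coloring_if_circular_chromatic_number_le[OF assms(1-3)]
    circ_coloring_of_real_circ_coloring[OF _ assms(4,5)] by blast

lemma cbox_d_Int:
  "cbox_d d a b \<inter> cbox_d d a' b' = cbox_d d (\<lambda>i. max (a i) (a' i)) (\<lambda>i. min (b i) (b' i))"
  by (auto simp: cbox_d_def)

lemma cbox_d_eq_empty_iff: "cbox_d d a b = {} \<longleftrightarrow> (\<exists>i<d. b i < a i)"
proof
  assume "cbox_d d a b = {}"
  then have "(\<lambda>i. if i < d then a i else 0) \<notin> cbox_d d a b" by blast
  then show "\<exists>i<d. b i < a i" by (force simp: cbox_d_def)
qed (force simp: cbox_d_def)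

lemma obox_d_Int_eq_empty:
  assumes "i < d" and "min (b i) (b' i) \<le> max (a i) (a' i)"
  shows "obox_d d a b \<inter> obox_d d a' b' = {}"
  using assms by (force simp: obox_d_def)

lemma d_CBU_I:
  fixes A B :: "'a \<Rightarrow> nat \<Rightarrow> real"
  assumes "0 < d"
    and pos: "\<And>v i. v \<in> V \<Longrightarrow> i < d \<Longrightarrow> A v i < B v i"
    and edge: "\<And>u v. u \<in> V \<Longrightarrow> v \<in> V \<Longrightarrow> u \<noteq> v \<Longrightarrow> E u v \<Longrightarrow>
      max (A u 0) (A v 0) = min (B u 0) (B v 0) \<and>
      (\<forall>i\<in>{1..<d}. max (A u i) (A v i) < min (B u i) (B v i))"
    and nonedge: "\<And>u v. u \<in> V \<Longrightarrow> v \<in> V \<Longrightarrow> u \<noteq> v \<Longrightarrow> \<not> E u v \<Longrightarrow>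
      \<exists>i<d. min (B u i) (B v i) < max (A u i) (A v i)"
  shows "d_CBU d V E"
proof -
  have obox: "obox_d d (A u) (B u) \<inter> obox_d d (A v) (B v) = {}"
    if uv: "u \<in> V" "v \<in> V" "u \<noteq> v" for u v
  proof (cases "E u v")
    case True
    then show ?thesis using edge[OF uv True] \<open>0 < d\<close> by (intro obox_d_Int_eq_empty) auto
  next
    case False
    then obtain i where "i < d" "min (B u i) (B v i) < max (A u i) (A v i)"
      using nonedge[OF uv False] by blast
    then show ?thesis by (intro obox_d_Int_eq_empty) auto
  qed
  have meet: "E u v \<longleftrightarrow> cbox_d d (A u) (B u) \<inter> cbox_d d (A v) (B v) \<noteq> {}"
    if uv: "u \<in> V" "v \<in> V" "u \<noteq> v" for u v
  proof
    assume "E u v"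
    note uv_edge = edge[OF uv this]
    have "max (A u i) (A v i) \<le> min (B u i) (B v i)" if "i < d" for i
    proof (cases "i = 0")
      case False
      with \<open>i < d\<close> have "i \<in> {1..<d}" by simp
      then show ?thesis using uv_edge by fastforce
    qed (use uv_edge in simp)
    then show "cbox_d d (A u) (B u) \<inter> cbox_d d (A v) (B v) \<noteq> {}"
      unfolding cbox_d_Int cbox_d_eq_empty_iff by (meson not_less)
  next
    assume "cbox_d d (A u) (B u) \<inter> cbox_d d (A v) (B v) \<noteq> {}"
    then show "E u v"
      using nonedge[OF uv] unfolding cbox_d_Int cbox_d_eq_empty_iff by force
  qed
  have face: "\<exists>a b. a 0 = b 0 \<and> (\<forall>i. 1 \<le> i \<and> i < d \<longrightarrow> a i < b i) \<and>
      cbox_d d (A u) (B u) \<inter> cbox_d d (A v) (B v) = cbox_d d a b"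
    if "u \<in> V" "v \<in> V" "u \<noteq> v" "E u v" for u v
    using edge[OF that] unfolding cbox_d_Int
    by (intro exI[of _ "\<lambda>i. max (A u i) (A v i)"] exI[of _ "\<lambda>i. min (B u i) (B v i)"]) auto
  show ?thesis
    unfolding d_CBU_def using pos obox meet face by blast
qed

lemma d_CBU_of_touching_intervals:
  fixes lo hi :: "'a \<Rightarrow> real"
  assumes "finite V" and sym: "\<And>u v. E u v \<Longrightarrow> E v u"
    and interval: "\<And>v. v \<in> V \<Longrightarrow> lo v < hi v"
    and touch: "\<And>u v. u \<in> V \<Longrightarrow> v \<in> V \<Longrightarrow> E u v \<Longrightarrow> hi u = lo v \<or> hi v = lo u"
  shows "d_CBU (Suc (card V)) V E"
proof -
  obtain h where h: "bij_betw h V {0..<card V}"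
    using ex_bij_betw_finite_nat[OF \<open>finite V\<close>] by blast
  then have h_inj: "h u = h v \<longleftrightarrow> u = v" if "u \<in> V" "v \<in> V" for u v
    using that by (auto simp: bij_betw_def inj_on_def)
  have h_less: "h v < card V" if "v \<in> V" for v
    using h that by (auto simp: bij_betw_def)
  text \<open>Coordinate \<open>Suc (h v)\<close> is private to \<open>v\<close>: there its box is \<open>[0, 1]\<close>, the boxes of
    its neighbours reach down to \<open>1/2\<close> and all other boxes stay inside \<open>[2, 3]\<close>.\<close>
  define A where "A v i = (if i = 0 then lo v else if i = Suc (h v) then 0
      else if \<exists>w\<in>V. Suc (h w) = i \<and> E v w then 1/2 else 2)" for v i
  define B where "B v i = (if i = 0 then hi v else if i = Suc (h v) then 1 else 3)" for v i
  show ?thesis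
  proof (rule d_CBU_I)
    fix v i assume "v \<in> V"
    then show "A v i < B v i" using interval by (simp add: A_def B_def)
  next
    fix u v assume uv: "u \<in> V" "v \<in> V" "u \<noteq> v" "E u v"
    have "max (lo u) (lo v) = min (hi u) (hi v)"
      using touch[of u v] interval[of u] interval[of v] uv by auto
    moreover have "max (A u i) (A v i) < min (B u i) (B v i)" if "1 \<le> i" for i
      using that uv h_inj sym by (auto simp: A_def B_def)
    ultimately show "max (A u 0) (A v 0) = min (B u 0) (B v 0) \<and>
        (\<forall>i\<in>{1..<Suc (card V)}. max (A u i) (A v i) < min (B u i) (B v i))"
      by (simp add: A_def B_def)
  next
    fix u v assume uv: "u \<in> V" "v \<in> V" "u \<noteq> v" "\<not> E u v"
    then have "B u (Suc (h u)) < A v (Suc (h u))"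
      using h_inj sym by (auto simp: A_def B_def)
    moreover have "A u (Suc (h u)) < B v (Suc (h u))"
      using uv h_inj by (simp add: A_def B_def)
    ultimately show "\<exists>i<Suc (card V). min (B u i) (B v i) < max (A u i) (A v i)"
      using h_less[OF uv(1)] by (intro exI[of _ "Suc (h u)"]) auto
  qed simp
qed

text \<open>Colours 3, 0, 2, 4 occupy consecutive unit intervals and colour 1 spans \<open>[1, 3]\<close>, so
  colours at circular distance 2 modulo 5 get intervals meeting in exactly one endpoint.\<close>
definition pentagram_lo :: "nat \<Rightarrow> real" where
  "pentagram_lo c = [1, 1, 2, 0, 3] ! c"

definition pentagram_hi :: "nat \<Rightarrow> real" where
  "pentagram_hi c = [2, 3, 3, 1, 4] ! c"

lemma pentagram_lo_less_hi: "c < 5 \<Longrightarrow> pentagram_lo c < pentagram_hi c"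
  by (auto simp: pentagram_lo_def pentagram_hi_def less_Suc_eq numeral_eq_Suc)

lemma pentagram_intervals_touch:
  assumes "c < 5" "c' < 5" "2 \<le> \<bar>int c - int c'\<bar>" "\<bar>int c - int c'\<bar> \<le> 3"
  shows "pentagram_hi c = pentagram_lo c' \<or> pentagram_hi c' = pentagram_lo c"
proof -
  have "c = 0 \<or> c = 1 \<or> c = 2 \<or> c = 3 \<or> c = 4" "c' = 0 \<or> c' = 1 \<or> c' = 2 \<or> c' = 3 \<or> c' = 4"
    using assms(1,2) by auto
  then show ?thesis
    using assms(3,4) by (elim disjE) (simp_all add: pentagram_lo_def pentagram_hi_def)
qed

lemma d_CBU_if_circ_coloring_5_2:
  assumes "finite V" and "\<And>u v. E u v \<Longrightarrow> E v u" and col: "circ_coloring V E 5 2 c"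
  shows "d_CBU (Suc (card V)) V E"
proof (rule d_CBU_of_touching_intervals[OF assms(1,2)])
  fix u v assume uv: "u \<in> V" "v \<in> V"
  then have "c u < 5" "c v < 5" using col by (auto simp: circ_coloring_def)
  then show "pentagram_lo (c v) < pentagram_hi (c v)"
    by (simp add: pentagram_lo_less_hi)
  assume "E u v"
  with uv col have "2 \<le> \<bar>int (c u) - int (c v)\<bar>" "\<bar>int (c u) - int (c v)\<bar> \<le> 3"
    by (auto simp: circ_coloring_def)
  with \<open>c u < 5\<close> \<open>c v < 5\<close>
  show "pentagram_hi (c u) = pentagram_lo (c v) \<or> pentagram_hi (c v) = pentagram_lo (c u)"
    by (rule pentagram_intervals_touch)
qed

theorem mainTheorem15:
  fixes V :: "'a set" and E :: "'a \<Rightarrow> 'a \<Rightarrow> bool"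
  assumes "finite V" and "is_graph V E"
    and "circular_chromatic_number V E \<le> 5 / 2"
  shows "CBU V E"
proof -
  have sym: "\<And>u v. E u v \<Longrightarrow> E v u" and irrefl: "\<And>v. \<not> E v v"
    using \<open>is_graph V E\<close> by (auto simp: is_graph_def)
  have "circular_chromatic_number V E \<le> real 5 / real 2"
    using assms(3) by simp
  then obtain c where "circ_coloring V E 5 2 c"
    using circ_colorable_if_circular_chromatic_number_le[of V E 5 2, OF \<open>finite V\<close> irrefl]
    by force
  then have "d_CBU (Suc (card V)) V E"
    using d_CBU_if_circ_coloring_5_2[of V E] \<open>finite V\<close> sym by blast
  then show ?thesis unfolding CBU_def by (intro exI[of _ "Suc (card V)"]) simp
qed

end
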